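(* Let $F$ be any one of the six faces of the cube $\widehat{\mathbf K}=[-1,1]^3$, let $V_1^F,\dots,V_4^F$ be its four vertices and $M^F$ its centroid. If $p\in\widehat{\mathbb P}^{(1)}_{SK}$ satisfies $p(V_j^F)=0$ for $j=1,2,3,4$ and $p(M^F)=0$, then $\int_F p\,ds=0$.
   Context: Coordinates on $\mathbb R^3$ are $(x_1,x_2,x_3)$; $P_2$ denotes polynomials of total degree at most $2$. The Type 1 Smith–Kidger space is $\widehat{\mathbb P}^{(1)}_{SK}=P_2\oplus\mathrm{Span}\{x_1x_2x_3,\ x_1^2x_2,\ x_2^2x_3,\ x_3^2x_1\}$, considered on $\widehat{\mathbf K}=[-1,1]^3$. *)

theory Defs
  imports "HOL-Analysis.Analysis"
begin

definition SK1 :: "(real^3 \<Rightarrow> real) set" where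
  "SK1 = {p. \<exists>a::nat \<Rightarrow> real. \<forall>x::real^3.
     p x = a 0 + a 1 * x$1 + a 2 * x$2 + a 3 * x$3
         + a 4 * (x$1)^2 + a 5 * (x$2)^2 + a 6 * (x$3)^2
         + a 7 * x$1 * x$2 + a 8 * x$1 * x$3 + a 9 * x$2 * x$3
         + a 10 * x$1 * x$2 * x$3 + a 11 * (x$1)^2 * x$2
         + a 12 * (x$2)^2 * x$3 + a 13 * (x$3)^2 * x$1}"

text \<open>Parametrization of the face {x in [-1,1]^3. x_k = s} (k in {1,2,3}, s in {-1,1})
  by the two remaining coordinates (u,v) in [-1,1]^2, in increasing index order.
  It is an isometry, so ds = du dv.\<close>
definition face_map :: "nat \<Rightarrow> real \<Rightarrow> real \<Rightarrow> real \<Rightarrow> real^3" where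
  "face_map k s u v =
     (if k = 1 then vector [s, u, v] else if k = 2 then vector [u, s, v] else vector [u, v, s])"

end

theory Submission imports Defs begin

text \<open>On each face the trace of a function in SK1 lies in the space spanned by
  1, u, v, u^2, v^2, uv, u^2 v, u v^2. For that space the cubature rule with weight 1/3 at the
  four vertices and 8/3 at the centroid is exact, since both sides equal 4 c0 + 4/3 (c3 + c4)
  (the odd monomials integrate to zero and do not contribute to the rule). Hence vanishing at
  the five nodes forces the face integral to vanish. The argument works for every
  plane x_k = s.\<close>

lemma integral_cubic_symmetric:
  fixes A B C D :: real
  shows "integral {-1..1} (\<lambda>v. A + B * v + C * v^2 + D * v^3) = 2 * A + 2/3 * C"
proof -
  let ?F = "\<lambda>v::real. A * v + B * v^2 / 2 + C * v^3 / 3 + D * v^4 / 4"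
  have "((\<lambda>v. A + B * v + C * v^2 + D * v^3) has_integral ?F 1 - ?F (-1)) {-1..1}"
  proof (rule fundamental_theorem_of_calculus)
    fix v :: real
    show "(?F has_vector_derivative A + B * v + C * v^2 + D * v^3) (at v within {-1..1})"
      by (rule has_real_derivative_iff_has_vector_derivative[THEN iffD1])
        (rule derivative_eq_intros refl | simp)+
  qed simp
  then show ?thesis
    by (simp add: integral_unique)
qed

definition face_poly :: "(nat \<Rightarrow> real) \<Rightarrow> real \<Rightarrow> real \<Rightarrow> real" where
  "face_poly c u v = c 0 + c 1 * u + c 2 * v + c 3 * u^2 + c 4 * v^2
     + c 5 * u * v + c 6 * u^2 * v + c 7 * u * v^2"

lemma integral_face_poly:
  "integral (cbox (-1, -1) (1, 1)) (\<lambda>(u, v). face_poly c u v) = 4 * c 0 + 4/3 * (c 3 + c 4)"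
proof -
  have inner: "integral {-1..1} (\<lambda>v. face_poly c u v)
      = (2 * c 0 + 2/3 * c 4) + (2 * c 1 + 2/3 * c 7) * u + (2 * c 3) * u^2 + 0 * u^3" for u
  proof -
    have "(\<lambda>v. face_poly c u v) = (\<lambda>v. (c 0 + c 1 * u + c 3 * u^2) + (c 2 + c 5 * u + c 6 * u^2) * v
        + (c 4 + c 7 * u) * v^2 + 0 * v^3)"
      by (auto simp: face_poly_def algebra_simps)
    then show ?thesis
      by (simp only: integral_cubic_symmetric) (simp add: algebra_simps)
  qed
  have "integral (cbox (-1, -1) (1, 1)) (\<lambda>(u, v). face_poly c u v)
      = integral {-1..1} (\<lambda>u. integral {-1..1} (\<lambda>v. face_poly c u v))"
    using integral_prod_continuous[of "-1" "-1" 1 1 "\<lambda>(u, v). face_poly c u v"]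
    by (simp add: face_poly_def case_prod_beta continuous_intros)
  also have "\<dots> = 4 * c 0 + 4/3 * (c 3 + c 4)"
    by (simp only: inner integral_cubic_symmetric) (simp add: algebra_simps)
  finally show ?thesis .
qed

lemma integral_face_poly_cubature:
  "integral (cbox (-1, -1) (1, 1)) (\<lambda>(u, v). face_poly c u v)
     = (face_poly c 1 1 + face_poly c 1 (-1) + face_poly c (-1) 1 + face_poly c (-1) (-1)) / 3
       + 8/3 * face_poly c 0 0"
  unfolding integral_face_poly by (simp add: face_poly_def field_simps)

lemma SK1_trace_on_face:
  assumes "p \<in> SK1" and "k \<in> {1, 2, 3}"
  obtains c where "\<And>u v. p (face_map k s u v) = face_poly c u v"
proof -
  obtain a :: "nat \<Rightarrow> real" where a: "\<And>x::real^3. p x = a 0 + a 1 * x$1 + a 2 * x$2 + a 3 * x$3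
         + a 4 * (x$1)^2 + a 5 * (x$2)^2 + a 6 * (x$3)^2
         + a 7 * x$1 * x$2 + a 8 * x$1 * x$3 + a 9 * x$2 * x$3
         + a 10 * x$1 * x$2 * x$3 + a 11 * (x$1)^2 * x$2
         + a 12 * (x$2)^2 * x$3 + a 13 * (x$3)^2 * x$1"
    using assms(1) unfolding SK1_def by blast
  from assms(2) consider "k = 1" | "k = 2" | "k = 3" by blast
  then show thesis
  proof cases
    case 1
    then show thesis
      by (intro that[of "nth [a 0 + a 1 * s + a 4 * s^2, a 2 + a 7 * s + a 11 * s^2, a 3 + a 8 * s,
          a 5, a 6 + a 13 * s, a 9 + a 10 * s, a 12, 0]"])
        (simp add: face_map_def face_poly_def a algebra_simps)
  next
    case 2
    then show thesis
      by (intro that[of "nth [a 0 + a 2 * s + a 5 * s^2, a 1 + a 7 * s, a 3 + a 9 * s + a 12 * s^2,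
          a 4 + a 11 * s, a 6, a 8 + a 10 * s, 0, a 13]"])
        (simp add: face_map_def face_poly_def a algebra_simps)
  next
    case 3
    then show thesis
      by (intro that[of "nth [a 0 + a 3 * s + a 6 * s^2, a 1 + a 8 * s + a 13 * s^2, a 2 + a 9 * s,
          a 4, a 5 + a 12 * s, a 7 + a 10 * s, a 11, 0]"])
        (simp add: face_map_def face_poly_def a algebra_simps)
  qed
qed

theorem lemma2:
  fixes p :: "real^3 \<Rightarrow> real" and k :: nat and s :: real
  assumes "p \<in> SK1"
    and "k \<in> {1, 2, 3}" and "s \<in> {-1, 1}"
    and "\<forall>u\<in>{-1, 1}. \<forall>v\<in>{-1, 1}. p (face_map k s u v) = 0"
    and "p (face_map k s 0 0) = 0"
  shows "integral (cbox (-1, -1) (1, 1)) (\<lambda>(u, v). p (face_map k s u v)) = 0"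
proof -
  obtain c where c: "\<And>u v. p (face_map k s u v) = face_poly c u v"
    using SK1_trace_on_face[OF assms(1,2), of s] by blast
  have "integral (cbox (-1, -1) (1, 1)) (\<lambda>(u, v). p (face_map k s u v))
      = (face_poly c 1 1 + face_poly c 1 (-1) + face_poly c (-1) 1 + face_poly c (-1) (-1)) / 3
        + 8/3 * face_poly c 0 0"
    by (simp only: c integral_face_poly_cubature)
  also have "\<dots> = 0"
    using assms(4,5) by (simp add: c[symmetric])
  finally show ?thesis .
qed

end
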